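(* In the setting below, any two correct processes are intertwined: for all $i,j\in W$, every quorum $Q$ of $i$ and every quorum $Q'$ of $j$ satisfy $|Q\cap Q'|>f$.
   Context: Processes and faults: $\Pi$ is a finite set of processes, $f\ge0$ a known integer; $W\subseteq\Pi$ is the set of correct processes and $F=\Pi\setminus W$ the Byzantine faulty processes, $|F|\le f$. Faulty processes may declare arbitrary slices. Slices and quorums: each process $i$ has a set $\mathcal{S}_i$ of slices (subsets of $\Pi$). $Q\subseteq\Pi$ is a quorum if every $i\in Q$ has some $S\in\mathcal{S}_i$ with $S\subseteq Q$; a quorum of $i$ is a quorum containing $i$. Two correct processes $i,j$ are intertwined if $|Q\cap Q'|>f$ for every quorum $Q$ of $i$ and every quorum $Q'$ of $j$. Knowledge graph: each process $i$ is given $\mathit{PD}_i\subseteq\Pi$; $G_{\mathit{di}}$ is the directed graph on $\Pi$ with edge $(i,j)$ iff $j\in\mathit{PD}_i$. A sink component is a strongly connected component of $G_{\mathit{di}}$ from which no path leads outside it. A directed graph is $k$-OSR if (1) its underlying undirected graph is connected; (2) its condensation into strongly connected components has exactly one sink $G_{\mathit{sink}}$; (3) $G_{\mathit{sink}}$ is $k$-strongly connected (every ordered pair of its nodes joined by $k$ node-disjoint directed paths); (4) from every node outside $G_{\mathit{sink}}$ to every node in it there are at least $k$ node-disjoint directed paths. Standing assumption: $G_{\mathit{di}}$ has a unique sink component with vertex set $V_{\mathit{sink}}$, which contains at least $2f+1$ correct processes, and the graph obtained from $G_{\mathit{di}}$ by deleting $F$ is $(f+1)$-OSR. Slice construction: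 let $m=\lceil (|V_{\mathit{sink}}|+f+1)/2\rceil$. Every correct $i\in V_{\mathit{sink}}$ has $\mathcal{S}_i=\{S\subseteq V_{\mathit{sink}}: |S|=m\}$. Every correct $i\notin V_{\mathit{sink}}$ is given a set $V_i\subseteq V_{\mathit{sink}}$ containing at least $f+1$ correct members of $V_{\mathit{sink}}$, and has $\mathcal{S}_i=\{S\subseteq V_i: |S|=f+1\}$. *)

theory Defs
  imports Complex_Main
begin

definition is_quorum :: "'p set \<Rightarrow> ('p \<Rightarrow> 'p set set) \<Rightarrow> 'p set \<Rightarrow> bool" where
  "is_quorum P S Q \<longleftrightarrow> Q \<subseteq> P \<and> (\<forall>i\<in>Q. \<exists>T\<in>S i. T \<subseteq> Q)"

definition intertwined :: "'p set \<Rightarrow> ('p \<Rightarrow> 'p set set) \<Rightarrow> nat \<Rightarrow> 'p \<Rightarrow> 'p \<Rightarrow> bool" where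
  "intertwined P S f i j \<longleftrightarrow>
     (\<forall>Q Q'. is_quorum P S Q \<and> i \<in> Q \<and> is_quorum P S Q' \<and> j \<in> Q' \<longrightarrow> card (Q \<inter> Q') > f)"

definition di_edges :: "'p set \<Rightarrow> ('p \<Rightarrow> 'p set) \<Rightarrow> ('p \<times> 'p) set" where
  "di_edges P PD = {(i, j). i \<in> P \<and> j \<in> P \<and> j \<in> PD i}"

definition scc :: "'p set \<Rightarrow> ('p \<times> 'p) set \<Rightarrow> 'p set \<Rightarrow> bool" where
  "scc V E C \<longleftrightarrow> C \<noteq> {} \<and> C \<subseteq> V \<and> (\<forall>u\<in>C. \<forall>v\<in>C. (u, v) \<in> E\<^sup>*) \<and>
     (\<forall>u\<in>C. \<forall>x\<in>V. (u, x) \<in> E\<^sup>* \<and> (x, u) \<in> E\<^sup>* \<longrightarrow> x \<in> C)"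

definition sink_component :: "'p set \<Rightarrow> ('p \<times> 'p) set \<Rightarrow> 'p set \<Rightarrow> bool" where
  "sink_component V E C \<longleftrightarrow> scc V E C \<and> (\<forall>u\<in>C. \<forall>v. (u, v) \<in> E\<^sup>* \<longrightarrow> v \<in> C)"

definition is_path :: "'p set \<Rightarrow> ('p \<times> 'p) set \<Rightarrow> 'p list \<Rightarrow> 'p \<Rightarrow> 'p \<Rightarrow> bool" where
  "is_path V E xs u v \<longleftrightarrow> xs \<noteq> [] \<and> hd xs = u \<and> last xs = v \<and> distinct xs \<and> set xs \<subseteq> V \<and>
     (\<forall>n < length xs - 1. (xs ! n, xs ! Suc n) \<in> E)"

definition interior :: "'p list \<Rightarrow> 'p set" where
  "interior xs = set (butlast (tl xs))"

definition disjoint_paths :: "'p set \<Rightarrow> ('p \<times> 'p) set \<Rightarrow> nat \<Rightarrow> 'p \<Rightarrow> 'p \<Rightarrow> bool" where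
  "disjoint_paths V E k u v \<longleftrightarrow> (\<exists>Ps. finite Ps \<and> card Ps = k \<and> (\<forall>p\<in>Ps. is_path V E p u v) \<and>
     (\<forall>p\<in>Ps. \<forall>q\<in>Ps. p \<noteq> q \<longrightarrow> interior p \<inter> interior q = {}))"

definition k_strongly_connected :: "'p set \<Rightarrow> ('p \<times> 'p) set \<Rightarrow> nat \<Rightarrow> bool" where
  "k_strongly_connected C E k \<longleftrightarrow>
     (\<forall>u\<in>C. \<forall>v\<in>C. u \<noteq> v \<longrightarrow> disjoint_paths C (E \<inter> (C \<times> C)) k u v)"

definition k_OSR :: "'p set \<Rightarrow> ('p \<times> 'p) set \<Rightarrow> nat \<Rightarrow> bool" where
  "k_OSR V E k \<longleftrightarrow>
     (\<forall>u\<in>V. \<forall>v\<in>V. (u, v) \<in> (E \<union> E\<inverse>)\<^sup>*) \<and>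
     (\<exists>!C. sink_component V E C) \<and>
     (\<forall>C. sink_component V E C \<longrightarrow>
        k_strongly_connected C E k \<and> (\<forall>u\<in>V - C. \<forall>v\<in>C. disjoint_paths V E k u v))"

end

theory Submission
  imports Defs
begin

text \<open>Every quorum of a correct process contains m = \<lceil>(|V_sink| + f + 1) / 2\<rceil> members of V_sink:
  for a process in V_sink this is one of its slices; a process outside V_sink has a slice of
  f + 1 members of V_sink, at least one of them correct, and the quorum also contains a slice
  of that process. Two m-subsets of V_sink share at least 2m - |V_sink| \<ge> f + 1 elements.\<close>

lemma card_Int_gt_if_subsets_large:
  assumes "finite V" "A \<subseteq> V" "B \<subseteq> V" "card V + f < card A + card B"
  shows "f < card (A \<inter> B)"
proof -
  have "finite A" "finite B" using assms finite_subset by auto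
  then have "card (A \<union> B) + card (A \<inter> B) = card A + card B" by (rule card_Un_Int[symmetric])
  moreover have "card (A \<union> B) \<le> card V" using assms by (intro card_mono) auto
  ultimately show ?thesis using assms(4) by linarith
qed

lemma le_two_mul_nat_ceiling_half: "n \<le> 2 * nat \<lceil>real n / 2\<rceil>"
proof -
  have "real n / 2 \<le> of_int \<lceil>real n / 2\<rceil>" by (rule le_of_int_ceiling)
  then show ?thesis by linarith
qed

lemma card_gt_faulty_imp_meets_correct:
  assumes "finite P" "T \<subseteq> P" "card (P - W) \<le> f" "f < card T"
  shows "T \<inter> W \<noteq> {}"
proof
  assume "T \<inter> W = {}"
  then have "T \<subseteq> P - W" using assms(2) by blast
  then have "card T \<le> card (P - W)" using assms(1) by (intro card_mono) auto
  then show False using assms(3,4) by linarith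
qed

lemma quorum_contains_slice:
  assumes "is_quorum P S Q" "i \<in> Q"
  obtains T where "T \<in> S i" "T \<subseteq> Q"
  using assms unfolding is_quorum_def by blast

lemma quorum_of_correct_contains_sink_part:
  assumes finP: "finite P" and sink_sub: "Vsink \<subseteq> P"
    and faulty_bound: "card (P - W) \<le> f"
    and slices_sink: "\<forall>i\<in>W \<inter> Vsink. S i = {T. T \<subseteq> Vsink \<and> card T = m}"
    and slices_out: "\<forall>i\<in>W - Vsink. Vi i \<subseteq> Vsink \<and> S i = {T. T \<subseteq> Vi i \<and> card T = f + 1}"
    and quorum: "is_quorum P S Q" "i \<in> Q" "i \<in> W"
  shows "\<exists>T. T \<subseteq> Q \<and> T \<subseteq> Vsink \<and> card T = m"
proof -
  have in_sink_case: "\<exists>T. T \<subseteq> Q \<and> T \<subseteq> Vsink \<and> card T = m"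
    if "j \<in> W \<inter> Vsink" "j \<in> Q" for j
  proof -
    obtain T where "T \<in> S j" "T \<subseteq> Q" using quorum(1) \<open>j \<in> Q\<close> by (rule quorum_contains_slice)
    with slices_sink that(1) show ?thesis by auto
  qed
  show ?thesis
  proof (cases "i \<in> Vsink")
    case True
    with in_sink_case quorum(2,3) show ?thesis by blast
  next
    case False
    obtain T where T: "T \<in> S i" "T \<subseteq> Q" using quorum(1,2) by (rule quorum_contains_slice)
    with slices_out False quorum(3) have "T \<subseteq> Vsink" "card T = f + 1" by auto
    then have "T \<inter> W \<noteq> {}"
      using sink_sub by (intro card_gt_faulty_imp_meets_correct[OF finP _ faulty_bound]) auto
    then obtain j where "j \<in> T" "j \<in> W" by blast
    with in_sink_case \<open>T \<subseteq> Vsink\<close> T(2) show ?thesis by blast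
  qed
qed

text \<open>The knowledge-graph hypotheses, and the f + 1 correct members of each V_i, are what lets
  processes build these slices; intertwinedness itself needs only the slices and the fault bound.\<close>

theorem theorem3:
  fixes P :: "'p set" and f :: nat and W :: "'p set"
    and S :: "'p \<Rightarrow> 'p set set" and PD :: "'p \<Rightarrow> 'p set"
    and Vsink :: "'p set" and Vi :: "'p \<Rightarrow> 'p set"
  assumes finP: "finite P"
    and W_sub: "W \<subseteq> P"
    and faulty_bound: "card (P - W) \<le> f"
    and PD_sub: "\<forall>i\<in>P. PD i \<subseteq> P"
    and slices_sub: "\<forall>i\<in>P. \<forall>T\<in>S i. T \<subseteq> P"
    and sink: "sink_component P (di_edges P PD) Vsink"
    and sink_unique: "\<forall>C. sink_component P (di_edges P PD) C \<longrightarrow> C = Vsink"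
    and sink_correct: "card (Vsink \<inter> W) \<ge> 2 * f + 1"
    and osr: "k_OSR W (di_edges P PD \<inter> (W \<times> W)) (f + 1)"
    and slices_sink: "\<forall>i\<in>W \<inter> Vsink.
        S i = {T. T \<subseteq> Vsink \<and> card T = nat \<lceil>real (card Vsink + f + 1) / 2\<rceil>}"
    and slices_out: "\<forall>i\<in>W - Vsink. Vi i \<subseteq> Vsink \<and> card (Vi i \<inter> W) \<ge> f + 1 \<and>
        S i = {T. T \<subseteq> Vi i \<and> card T = f + 1}"
  shows "\<forall>i\<in>W. \<forall>j\<in>W. intertwined P S f i j"
  unfolding intertwined_def
proof (intro ballI allI impI)
  fix i j Q Q'
  assume "i \<in> W" "j \<in> W"
    and quorums: "is_quorum P S Q \<and> i \<in> Q \<and> is_quorum P S Q' \<and> j \<in> Q'"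
  define m where "m = nat \<lceil>real (card Vsink + f + 1) / 2\<rceil>"
  have sink_sub: "Vsink \<subseteq> P" using sink unfolding sink_component_def scc_def by blast
  have slices_out': "\<forall>i\<in>W - Vsink. Vi i \<subseteq> Vsink \<and> S i = {T. T \<subseteq> Vi i \<and> card T = f + 1}"
    using slices_out by blast
  note sink_part = quorum_of_correct_contains_sink_part[OF finP sink_sub faulty_bound
      slices_sink[folded m_def] slices_out']
  obtain T where T: "T \<subseteq> Q" "T \<subseteq> Vsink" "card T = m"
    using sink_part[of Q i] quorums \<open>i \<in> W\<close> by blast
  obtain T' where T': "T' \<subseteq> Q'" "T' \<subseteq> Vsink" "card T' = m"
    using sink_part[of Q' j] quorums \<open>j \<in> W\<close> by blast
  have "card Vsink + f < card T + card T'"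
    using le_two_mul_nat_ceiling_half[of "card Vsink + f + 1"] T(3) T'(3) m_def by linarith
  then have "f < card (T \<inter> T')"
    by (rule card_Int_gt_if_subsets_large[OF finite_subset[OF sink_sub finP] T(2) T'(2)])
  also have "card (T \<inter> T') \<le> card (Q \<inter> Q')"
    using quorums finP T(1) T'(1) unfolding is_quorum_def
    by (intro card_mono) (auto intro: finite_subset)
  finally show "f < card (Q \<inter> Q')" .
qed

end
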